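(* Let $\Omega$ be a finite subset of $\mathbb{Z}^d\setminus\{0\}$ invariant under all symmetries of $\mathbb{Z}^d$, let $\phi:\mathbb{Z}_{\ge 0}\to[0,\infty)$ satisfy $\phi(0)=\phi(1)=0$ and $\phi(a+b)\ge\phi(a)+\phi(b)$, and let $\rho$ be a probability mass function on $\Omega$ invariant under all symmetries of $\mathbb{Z}^d$. Then there exists a constant $C>0$ such that for every $n\in\mathbb{N}$, $$e^{-C\sqrt n}\,Z_n\le H_n\le Z_n.$$
   Context: A walk of length $n$ is a sequence $\gamma=(\gamma(i))_{i=0}^n$ in $\mathbb{Z}^d$ with $\gamma(i)-\gamma(i-1)\in\Omega$ for $0<i\le n$; $\mathrm{W}_n$ is the set of such walks with $\gamma(0)=0$. For $v\in\mathbb{Z}^d$, $l_v(\gamma)=\#\{k:\gamma(k)=v\}$, and $\sigma(\gamma)=\prod_{v}e^{-\phi(l_v(\gamma))}\prod_{i=1}^n\rho(\gamma(i)-\gamma(i-1))$. $Z_n=\sum_{\gamma\in\mathrm{W}_n}\sigma(\gamma)$. For $v\in\mathbb{Z}^d$, $x(v)$ denotes its first coordinate. A walk $\gamma\in\mathrm{W}_n$ is a bridge if $x(\gamma(0))<x(\gamma(i))\le x(\gamma(n))$ for all $1\le i\le n$; $\mathrm{B}_n$ is the set of bridges of length $n$ and $H_n=\sum_{\gamma\in\mathrm{B}_n}\sigma(\gamma)$. *)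

theory Defs
  imports Complex_Main
begin

text \<open>Points of Z^d are represented as functions nat => int that vanish
outside {..<d}. The first coordinate x(v) is v 0.\<close>

type_synonym pt = "nat \<Rightarrow> int"

definition in_Zd :: "nat \<Rightarrow> pt \<Rightarrow> bool" where
  "in_Zd d v \<longleftrightarrow> (\<forall>i\<ge>d. v i = 0)"

definition origin :: pt where
  "origin = (\<lambda>_. 0)"

definition xcoord :: "pt \<Rightarrow> int" where
  "xcoord v = v 0"

text \<open>Symmetries of Z^d fixing the origin: signed coordinate permutations.\<close>
definition sym_map :: "nat \<Rightarrow> (nat \<Rightarrow> nat) \<Rightarrow> (nat \<Rightarrow> int) \<Rightarrow> pt \<Rightarrow> pt" where
  "sym_map d p s v = (\<lambda>i. if i < d then s i * v (p i) else 0)"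

definition is_symmetry :: "nat \<Rightarrow> (pt \<Rightarrow> pt) \<Rightarrow> bool" where
  "is_symmetry d g \<longleftrightarrow> (\<exists>p s. bij_betw p {..<d} {..<d} \<and> (\<forall>i<d. s i = 1 \<or> s i = -1)
                          \<and> g = sym_map d p s)"

definition walks :: "pt set \<Rightarrow> nat \<Rightarrow> pt list set" where
  "walks \<Omega> n = {\<gamma>. length \<gamma> = Suc n \<and> \<gamma> ! 0 = origin \<and>
      (\<forall>i\<in>{1..n}. (\<lambda>j. (\<gamma> ! i) j - (\<gamma> ! (i - 1)) j) \<in> \<Omega>)}"

definition local_time :: "pt list \<Rightarrow> pt \<Rightarrow> nat" where
  "local_time \<gamma> v = card {k. k < length \<gamma> \<and> \<gamma> ! k = v}"

text \<open>Weight sigma: the product over all v of exp(-phi(l_v)) reduces to the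
visited sites since phi 0 = 0.\<close>
definition sigma :: "(nat \<Rightarrow> real) \<Rightarrow> (pt \<Rightarrow> real) \<Rightarrow> pt list \<Rightarrow> real" where
  "sigma \<phi> \<rho> \<gamma> = (\<Prod>v\<in>set \<gamma>. exp (- \<phi> (local_time \<gamma> v))) *
      (\<Prod>i=1..length \<gamma> - 1. \<rho> (\<lambda>j. (\<gamma> ! i) j - (\<gamma> ! (i - 1)) j))"

definition Zn :: "pt set \<Rightarrow> (nat \<Rightarrow> real) \<Rightarrow> (pt \<Rightarrow> real) \<Rightarrow> nat \<Rightarrow> real" where
  "Zn \<Omega> \<phi> \<rho> n = (\<Sum>\<gamma>\<in>walks \<Omega> n. sigma \<phi> \<rho> \<gamma>)"

definition bridges :: "pt set \<Rightarrow> nat \<Rightarrow> pt list set" where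
  "bridges \<Omega> n = {\<gamma>\<in>walks \<Omega> n. \<forall>i\<in>{1..n}.
      xcoord (\<gamma> ! 0) < xcoord (\<gamma> ! i) \<and> xcoord (\<gamma> ! i) \<le> xcoord (\<gamma> ! n)}"

definition Hn :: "pt set \<Rightarrow> (nat \<Rightarrow> real) \<Rightarrow> (pt \<Rightarrow> real) \<Rightarrow> nat \<Rightarrow> real" where
  "Hn \<Omega> \<phi> \<rho> n = (\<Sum>\<gamma>\<in>bridges \<Omega> n. sigma \<phi> \<rho> \<gamma>)"

end

theory Submission
  imports Defs "HOL-Library.Function_Algebras"
begin

text \<open>Hammersley--Welsh unfolding. Cutting a walk at the last point where its first coordinate
  is minimal, and prepending one step \<open>u\<close> with \<open>u 0 > 0\<close> to the reversed initial piece, gives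
  two half-space walks; hence \<open>\<rho> u * Z n \<le> (\<Sum>m\<le>n. h (m + 1) * h (n - m))\<close>, where \<open>h\<close> sums
  the weights of half-space walks. Cutting a half-space walk at the last visit of its maximal
  first coordinate and reflecting the remainder splits off a bridge and leaves a half-space walk
  of smaller span. Iterating, a half-space walk becomes a concatenation of bridges with distinct
  spans \<open>S \<subseteq> {1..M}\<close>, \<open>M = O(n)\<close>, so that
  \<open>h n \<le> H n * (\<Sum>S. x ^ (\<Sum>S - M)) = H n * (\<Prod>k\<le>M. 1 + x ^ k) / x ^ M \<le> exp (3 * sqrt M) * H n\<close>
  for \<open>x = 1 - 1 / (2 * sqrt M)\<close>. Superadditivity of \<open>\<phi>\<close> makes the weight submultiplicative
  under concatenation and multiplicative on bridges, so \<open>H\<close> is supermultiplicative and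
  \<open>h (m + 1) * h (n - m) \<le> exp (O(sqrt n)) * H (n + 1)\<close>. Finally \<open>Z (n + 1) \<le> Z n\<close> because
  \<open>\<rho>\<close> is a probability.\<close>

lemma exp_minus_two_mult_le_one_minus:
  fixes \<delta> :: real
  assumes "0 \<le> \<delta>" "\<delta> \<le> 1/2"
  shows "exp (- 2 * \<delta>) \<le> 1 - \<delta>"
proof -
  have "1 + 2 * \<delta> \<le> exp (2 * \<delta>)"
    by (rule exp_ge_add_one_self_aux) (use assms in simp)
  then have "exp (- 2 * \<delta>) \<le> 1 / (1 + 2 * \<delta>)"
    using assms by (simp add: exp_minus field_simps)
  also have "\<dots> \<le> 1 - \<delta>"
  proof -
    have "0 \<le> \<delta> * (1 - 2 * \<delta>)" using assms by (intro mult_nonneg_nonneg) auto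
    then show ?thesis using assms by (simp add: field_simps algebra_simps)
  qed
  finally show ?thesis .
qed

lemma exists_prod_one_plus_power_div_le_exp_sqrt:
  assumes "1 \<le> M"
  shows "\<exists>x::real. 0 < x \<and> x \<le> 1 \<and> (\<Prod>k\<in>{1..M}. 1 + x ^ k) / x ^ M \<le> exp (3 * sqrt M)"
proof -
  define s where "s = sqrt (real M)"
  have s1: "1 \<le> s" using assms by (simp add: s_def)
  define \<delta> where "\<delta> = 1 / (2 * s)"
  have \<delta>: "0 < \<delta>" "\<delta> \<le> 1/2" using s1 by (auto simp: \<delta>_def field_simps)
  define x where "x = 1 - \<delta>"
  have x: "0 < x" "x < 1" using \<delta> by (auto simp: x_def)
  have "(\<Prod>k\<in>{1..M}. 1 + x ^ k) \<le> (\<Prod>k\<in>{1..M}. exp (x ^ k))"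
    using x by (intro prod_mono) (simp add: exp_ge_add_one_self add.commute)
  also have "\<dots> = exp (\<Sum>k\<in>{1..M}. x ^ k)" by (simp add: exp_sum)
  also have "(\<Sum>k\<in>{1..M}. x ^ k) \<le> (\<Sum>k\<le>M. x ^ k)"
    by (rule sum_mono2) (use x in auto)
  also have "\<dots> = (1 - x ^ Suc M) / (1 - x)" using x sum_gp_basic[of x M] by (simp add: field_simps)
  also have "\<dots> \<le> 1 / (1 - x)" using x by (simp add: divide_right_mono)
  also have "1 / (1 - x) = 2 * s" using s1 by (simp add: x_def \<delta>_def)
  finally have prod_le: "(\<Prod>k\<in>{1..M}. 1 + x ^ k) \<le> exp (2 * s)" by simp
  have "exp (- s) = exp (- 2 * \<delta>) ^ M"
  proof -
    have "2 * \<delta> * M = s" using s1 by (simp add: \<delta>_def s_def field_simps)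
    then show ?thesis by (metis exp_of_nat_mult mult.commute mult_minus_left)
  qed
  also have "\<dots> \<le> x ^ M"
    using exp_minus_two_mult_le_one_minus[of \<delta>] \<delta> by (simp add: x_def power_mono)
  finally have power_ge: "exp (- s) \<le> x ^ M" .
  have "(\<Prod>k\<in>{1..M}. 1 + x ^ k) / x ^ M \<le> exp (2 * s) / exp (- s)"
    using prod_le power_ge x by (intro frac_le) auto
  also have "\<dots> = exp (3 * s)" by (simp add: exp_minus field_simps exp_add[symmetric])
  finally show ?thesis using x by (auto simp: s_def)
qed

lemma mult_le_exp_mult_sqrt:
  assumes "1 \<le> N" "0 < K"
  shows "real N * K \<le> exp ((2 + \<bar>ln K\<bar>) * sqrt N)"
proof -
  let ?s = "sqrt (real N)"
  have s: "1 \<le> ?s" using assms by simp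
  have "?s \<le> exp ?s" using exp_ge_add_one_self[of ?s] by linarith
  then have "?s ^ 2 \<le> exp ?s ^ 2" by (intro power_mono) auto
  then have N: "real N \<le> exp (2 * ?s)" by (simp add: power2_eq_square exp_add[symmetric])
  have "K = exp (ln K)" using assms by simp
  also have "\<dots> \<le> exp (\<bar>ln K\<bar> * ?s)"
    using s by (simp add: order.trans[OF abs_ge_self mult_le_cancel_left1[THEN iffD2]])
  finally have "real N * K \<le> exp (2 * ?s) * exp (\<bar>ln K\<bar> * ?s)"
    using N assms by (intro mult_mono) auto
  then show ?thesis by (simp add: exp_add[symmetric] algebra_simps)
qed

lemma sum_le_sum_inj_on:
  fixes F :: "'a \<Rightarrow> 'b::ordered_comm_monoid_add"
  assumes "finite T" "inj_on f S" "f ` S \<subseteq> T" "\<And>y. y \<in> T \<Longrightarrow> 0 \<le> g y"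
    "\<And>x. x \<in> S \<Longrightarrow> F x \<le> g (f x)"
  shows "sum F S \<le> sum g T"
proof -
  have "sum F S \<le> sum (g \<circ> f) S" using assms(5) by (intro sum_mono) auto
  also have "\<dots> = sum g (f ` S)" by (simp add: sum.reindex[OF assms(2)])
  also have "\<dots> \<le> sum g T" using assms by (intro sum_mono2) auto
  finally show ?thesis .
qed

lemma sum_Pow_insert:
  assumes "finite X" "a \<notin> X"
  shows "sum F (Pow (insert a X)) = sum F (Pow X) + (\<Sum>S\<in>Pow X. F (insert a S))"
proof -
  have "inj_on (insert a) (Pow X)"
    using assms(2) by (intro inj_onI) (metis PowD insert_ident subsetD)
  then show ?thesis
    unfolding Pow_insert using assms
    by (subst sum.union_disjoint) (auto simp: sum.reindex)
qed

fun steps :: "'a::minus list \<Rightarrow> 'a list" where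
  "steps (a # b # l) = (b - a) # steps (b # l)"
| "steps _ = []"

lemma length_steps [simp]: "length (steps l) = length l - 1"
  by (induction l rule: steps.induct) auto

lemma nth_steps: "i < length l - 1 \<Longrightarrow> steps l ! i = l ! Suc i - l ! i"
proof (induction l arbitrary: i rule: steps.induct)
  case (1 a b l)
  then show ?case by (cases i) auto
qed auto

lemma steps_Cons: "l \<noteq> [] \<Longrightarrow> steps (a # l) = (hd l - a) # steps l"
  by (cases l) auto

lemma steps_append:
  "xs \<noteq> [] \<Longrightarrow> ys \<noteq> [] \<Longrightarrow> steps (xs @ ys) = steps xs @ (hd ys - last xs) # steps ys"
proof (induction xs)
  case (Cons a xs)
  then show ?case by (cases xs; cases ys) auto
qed simp

lemma steps_snoc: "xs \<noteq> [] \<Longrightarrow> steps (xs @ [a]) = steps xs @ [a - last xs]"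
  by (subst steps_append) auto

lemma steps_append_tl:
  assumes "p \<noteq> []" "q \<noteq> []" "last p = hd q"
  shows "steps (p @ tl q) = steps p @ steps q"
proof (cases "tl q")
  case Nil
  then show ?thesis using assms(2) by (cases q) auto
next
  case (Cons b r)
  have "q = hd q # b # r" using assms(2) Cons by (cases q) auto
  then have "steps q = (b - hd q) # steps (tl q)"
    using Cons by (metis steps.simps(1))
  then show ?thesis using assms Cons steps_append[of p "tl q"] by simp
qed

lemma steps_map: "(\<And>a b. f b - f a = L (b - a)) \<Longrightarrow> steps (map f l) = map L (steps l)"
  by (induction l rule: steps.induct) auto

lemma steps_rev: "steps (rev l) = rev (map uminus (steps (l :: 'a::group_add list)))"
proof (induction l rule: steps.induct)
  case (1 a b l)
  have "steps (rev (a # b # l)) = steps (rev (b # l)) @ [a - b]"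
    using steps_snoc[of "rev (b # l)" a] by simp
  then show ?case using 1 by (simp add: minus_diff_eq)
qed auto

lemma set_steps_subset_iff:
  "set (steps l) \<subseteq> S \<longleftrightarrow> (\<forall>i\<in>{1..length l - 1}. l ! i - l ! (i - 1) \<in> S)"
proof -
  have "{1..length l - 1} = Suc ` {..<length l - 1}"
    by (simp add: image_Suc_lessThan atLeastLessThanSuc_atLeastAtMost)
  moreover have "set (steps l) = (\<lambda>i. l ! Suc i - l ! i) ` {..<length l - 1}"
    by (auto simp: in_set_conv_nth image_iff nth_steps[symmetric])
  ultimately show ?thesis by (auto simp: image_image)
qed

lemma prod_steps:
  "(\<Prod>i=1..length l - 1. f (l ! i - l ! (i - 1))) = prod_list (map f (steps l))"
proof -
  have "{1..length l - 1} = Suc ` {..<length l - 1}"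
    by (simp add: image_Suc_lessThan atLeastLessThanSuc_atLeastAtMost)
  then have "(\<Prod>i=1..length l - 1. f (l ! i - l ! (i - 1))) = (\<Prod>i<length l - 1. f (l ! Suc i - l ! i))"
    by (simp add: prod.reindex)
  also have "\<dots> = (\<Prod>i<length l - 1. f (steps l ! i))"
    by (rule prod.cong) (auto simp: nth_steps)
  also have "\<dots> = prod_list (map f (steps l))"
    by (simp add: prod.list_conv_set_nth atLeast0LessThan)
  finally show ?thesis .
qed

definition visit_weight :: "(nat \<Rightarrow> real) \<Rightarrow> 'a list \<Rightarrow> real" where
  "visit_weight \<phi> l = (\<Prod>v\<in>set l. exp (- \<phi> (count_list l v)))"

lemma visit_weight_pos: "0 < visit_weight \<phi> l"
  unfolding visit_weight_def by (rule prod_pos) auto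

lemma visit_weight_eq_prod_superset:
  "\<phi> 0 = 0 \<Longrightarrow> finite U \<Longrightarrow> set l \<subseteq> U \<Longrightarrow>
    visit_weight \<phi> l = (\<Prod>v\<in>U. exp (- \<phi> (count_list l v)))"
  unfolding visit_weight_def by (rule prod.mono_neutral_left) auto

lemma visit_weight_map: "inj f \<Longrightarrow> visit_weight \<phi> (map f l) = visit_weight \<phi> l"
  unfolding visit_weight_def
  by (simp add: prod.reindex inj_on_subset[of f UNIV] count_list_map_conv)

lemma visit_weight_rev: "visit_weight \<phi> (rev l) = visit_weight \<phi> l"
  unfolding visit_weight_def by simp

lemma visit_weight_append_le:
  assumes "\<phi> 0 = 0" "\<And>a b. \<phi> a + \<phi> b \<le> \<phi> (a + b)"
  shows "visit_weight \<phi> (xs @ ys) \<le> visit_weight \<phi> xs * visit_weight \<phi> ys"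
proof -
  let ?U = "set xs \<union> set ys"
  have "visit_weight \<phi> (xs @ ys) = (\<Prod>v\<in>?U. exp (- \<phi> (count_list xs v + count_list ys v)))"
    using assms(1) by (subst visit_weight_eq_prod_superset[of _ ?U]) auto
  also have "\<dots> \<le> (\<Prod>v\<in>?U. exp (- \<phi> (count_list xs v)) * exp (- \<phi> (count_list ys v)))"
  proof (intro prod_mono conjI)
    fix v
    show "exp (- \<phi> (count_list xs v + count_list ys v))
        \<le> exp (- \<phi> (count_list xs v)) * exp (- \<phi> (count_list ys v))"
      using assms(2)[of "count_list xs v" "count_list ys v"] by (simp add: exp_add[symmetric])
  qed simp
  also have "\<dots> = visit_weight \<phi> xs * visit_weight \<phi> ys"
    using assms(1) by (simp add: prod.distrib visit_weight_eq_prod_superset[of _ ?U])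
  finally show ?thesis .
qed

lemma visit_weight_append_disjoint:
  assumes "\<phi> 0 = 0" "set xs \<inter> set ys = {}"
  shows "visit_weight \<phi> (xs @ ys) = visit_weight \<phi> xs * visit_weight \<phi> ys"
proof -
  let ?U = "set xs \<union> set ys"
  have "visit_weight \<phi> (xs @ ys) = (\<Prod>v\<in>?U. exp (- \<phi> (count_list xs v + count_list ys v)))"
    using assms(1) by (subst visit_weight_eq_prod_superset[of _ ?U]) auto
  also have "\<dots> = (\<Prod>v\<in>?U. exp (- \<phi> (count_list xs v)) * exp (- \<phi> (count_list ys v)))"
  proof (rule prod.cong)
    fix v
    show "exp (- \<phi> (count_list xs v + count_list ys v))
        = exp (- \<phi> (count_list xs v)) * exp (- \<phi> (count_list ys v))"
    proof (cases "v \<in> set xs")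
      case True
      then have "v \<notin> set ys" using assms(2) by blast
      then show ?thesis using assms(1) by simp
    qed (use assms(1) in simp)
  qed simp
  also have "\<dots> = visit_weight \<phi> xs * visit_weight \<phi> ys"
    using assms(1) by (simp add: prod.distrib visit_weight_eq_prod_superset[of _ ?U])
  finally show ?thesis .
qed

lemma visit_weight_singleton: "\<phi> 1 = 0 \<Longrightarrow> visit_weight \<phi> [a] = 1"
  by (simp add: visit_weight_def)

lemma visit_weight_Cons_fresh:
  "\<phi> 0 = 0 \<Longrightarrow> \<phi> 1 = 0 \<Longrightarrow> a \<notin> set l \<Longrightarrow> visit_weight \<phi> (a # l) = visit_weight \<phi> l"
  using visit_weight_append_disjoint[of \<phi> "[a]" l] by (simp add: visit_weight_singleton)

lemma pt_diff_eq: "(\<lambda>j. (x::pt) j - y j) = x - y"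
  by (simp add: fun_diff_def)

lemma origin_eq_0: "origin = 0"
  by (simp add: origin_def zero_fun_def)

lemma walks_iff:
  "\<gamma> \<in> walks \<Omega> n \<longleftrightarrow> length \<gamma> = Suc n \<and> hd \<gamma> = origin \<and> set (steps \<gamma>) \<subseteq> \<Omega>"
  unfolding walks_def set_steps_subset_iff pt_diff_eq by (cases \<gamma>) auto

lemma sigma_eq_visit_weight: "sigma \<phi> \<rho> l = visit_weight \<phi> l * prod_list (map \<rho> (steps l))"
proof -
  have "local_time l = count_list l" for l :: "pt list"
    unfolding local_time_def count_list_eq_length_filter length_filter_conv_card
    by (auto simp: eq_commute fun_eq_iff)
  then show ?thesis
    unfolding sigma_def visit_weight_def prod_steps[symmetric] pt_diff_eq by simp
qed

definition reflect_x :: "pt \<Rightarrow> pt" where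
  "reflect_x w = w(0 := - w 0)"

lemma reflect_x_diff: "reflect_x (a - b) = reflect_x a - reflect_x b"
  by (auto simp: reflect_x_def fun_eq_iff)

lemma reflect_x_reflect_x [simp]: "reflect_x (reflect_x a) = a"
  by (auto simp: reflect_x_def fun_eq_iff)

lemma reflect_x_0 [simp]: "reflect_x w 0 = - w 0"
  by (simp add: reflect_x_def)

definition join_walks :: "pt list \<Rightarrow> pt list \<Rightarrow> pt list" where
  "join_walks p q = p @ tl (map (\<lambda>v. v + last p) q)"

lemma Max_index_le:
  fixes P :: "nat \<Rightarrow> bool"
  assumes "i \<le> n" "P i"
  defines "m \<equiv> Max {i. i \<le> n \<and> P i}"
  shows "m \<le> n" "P m" "\<And>j. m < j \<Longrightarrow> j \<le> n \<Longrightarrow> \<not> P j"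
proof -
  have "m \<in> {i. i \<le> n \<and> P i}" unfolding m_def using assms(1,2) by (intro Max_in) auto
  then show "m \<le> n" "P m" by auto
  show "\<not> P j" if "m < j" "j \<le> n" for j
  proof
    assume "P j"
    then have "j \<le> m" unfolding m_def using that(2) by (intro Max_ge) auto
    then show False using that(1) by simp
  qed
qed

lemma take_append_tl_reflected_drop:
  assumes "m < length \<gamma>"
  shows "take (Suc m) \<gamma> @ tl (map (\<lambda>w. reflect_x w + last (take (Suc m) \<gamma>))
           (map (\<lambda>v. reflect_x (v - \<gamma> ! m)) (drop m \<gamma>))) = \<gamma>"
proof -
  have "last (take (Suc m) \<gamma>) = \<gamma> ! m" using assms by (simp add: take_Suc_conv_app_nth)
  moreover have "tl (drop m \<gamma>) = drop (Suc m) \<gamma>" by (simp add: drop_Suc tl_drop)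
  ultimately show ?thesis by (simp add: comp_def map_tl[symmetric])
qed

text \<open>Of the symmetry assumptions of the theorem only invariance under \<open>v \<mapsto> - v\<close> and under
  reflection of the first coordinate is needed.\<close>
locale walk_model =
  fixes \<Omega> :: "pt set" and \<phi> :: "nat \<Rightarrow> real" and \<rho> :: "pt \<Rightarrow> real"
  assumes finite_\<Omega>: "finite \<Omega>"
    and \<phi>_0: "\<phi> 0 = 0" and \<phi>_1: "\<phi> 1 = 0"
    and \<phi>_superadditive: "\<And>a b. \<phi> a + \<phi> b \<le> \<phi> (a + b)"
    and \<rho>_nonneg: "\<And>v. v \<in> \<Omega> \<Longrightarrow> 0 \<le> \<rho> v"
    and \<rho>_sum: "(\<Sum>v\<in>\<Omega>. \<rho> v) = 1"
    and uminus_invariant: "\<And>v. v \<in> \<Omega> \<Longrightarrow> - v \<in> \<Omega> \<and> \<rho> (- v) = \<rho> v"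
    and reflect_x_invariant: "\<And>v. v \<in> \<Omega> \<Longrightarrow> reflect_x v \<in> \<Omega> \<and> \<rho> (reflect_x v) = \<rho> v"
begin

abbreviation \<sigma> :: "pt list \<Rightarrow> real" where
  "\<sigma> \<equiv> sigma \<phi> \<rho>"

abbreviation W :: "nat \<Rightarrow> pt list set" where
  "W n \<equiv> walks \<Omega> n"

abbreviation B :: "nat \<Rightarrow> pt list set" where
  "B n \<equiv> bridges \<Omega> n"

abbreviation Z :: "nat \<Rightarrow> real" where
  "Z n \<equiv> Zn \<Omega> \<phi> \<rho> n"

abbreviation H :: "nat \<Rightarrow> real" where
  "H n \<equiv> Hn \<Omega> \<phi> \<rho> n"

lemma prod_steps_nonneg: "set (steps l) \<subseteq> \<Omega> \<Longrightarrow> 0 \<le> prod_list (map \<rho> (steps l))"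
  by (rule prod_list_nonneg) (auto intro: \<rho>_nonneg)

lemma sigma_nonneg: "set (steps l) \<subseteq> \<Omega> \<Longrightarrow> 0 \<le> \<sigma> l"
  unfolding sigma_eq_visit_weight using visit_weight_pos[of \<phi> l] prod_steps_nonneg[of l] by simp

lemma sigma_map:
  assumes "inj f" "\<And>a b. f b - f a = L (b - a)" "\<And>w. w \<in> \<Omega> \<Longrightarrow> L w \<in> \<Omega> \<and> \<rho> (L w) = \<rho> w"
    and "set (steps l) \<subseteq> \<Omega>"
  shows "\<sigma> (map f l) = \<sigma> l" "set (steps (map f l)) \<subseteq> \<Omega>"
proof -
  have st: "steps (map f l) = map L (steps l)" by (rule steps_map) (rule assms(2))
  have \<rho>_L: "map (\<rho> \<circ> L) (steps l) = map \<rho> (steps l)"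
    using assms(3,4) by (intro map_cong) auto
  show "\<sigma> (map f l) = \<sigma> l"
    unfolding sigma_eq_visit_weight visit_weight_map[OF assms(1)] st map_map \<rho>_L ..
  show "set (steps (map f l)) \<subseteq> \<Omega>" using st assms(3,4) by auto
qed

lemma sigma_translate:
  assumes "set (steps l) \<subseteq> \<Omega>"
  shows "\<sigma> (map (\<lambda>v. v + c) l) = \<sigma> l" "set (steps (map (\<lambda>v. v + c) l)) \<subseteq> \<Omega>"
  using sigma_map[of "\<lambda>v. v + c" id, OF _ _ _ assms] by (auto intro: injI)

lemma sigma_reflect:
  assumes "set (steps l) \<subseteq> \<Omega>"
  shows "\<sigma> (map (\<lambda>v. reflect_x (v - c)) l) = \<sigma> l"
    "set (steps (map (\<lambda>v. reflect_x (v - c)) l)) \<subseteq> \<Omega>"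
proof -
  have "inj (\<lambda>v. reflect_x (v - c))"
    by (rule injI) (metis reflect_x_reflect_x diff_add_cancel)
  moreover have "\<And>a b. reflect_x (b - c) - reflect_x (a - c) = reflect_x (b - a)"
    by (simp add: reflect_x_diff[symmetric])
  ultimately show "\<sigma> (map (\<lambda>v. reflect_x (v - c)) l) = \<sigma> l"
    "set (steps (map (\<lambda>v. reflect_x (v - c)) l)) \<subseteq> \<Omega>"
    using sigma_map[OF _ _ reflect_x_invariant assms] by auto
qed

lemma sigma_rev:
  assumes "set (steps l) \<subseteq> \<Omega>"
  shows "\<sigma> (rev l) = \<sigma> l" "set (steps (rev l)) \<subseteq> \<Omega>"
proof -
  have \<rho>_uminus: "map (\<rho> \<circ> uminus) (steps l) = map \<rho> (steps l)"
    using assms uminus_invariant by (intro map_cong) auto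
  have "prod_list (map \<rho> (steps (rev l))) = prod_list (map \<rho> (steps l))"
    unfolding steps_rev rev_map[symmetric] prod_list.rev map_map \<rho>_uminus ..
  then show "\<sigma> (rev l) = \<sigma> l"
    unfolding sigma_eq_visit_weight visit_weight_rev by simp
  show "set (steps (rev l)) \<subseteq> \<Omega>" using assms uminus_invariant by (auto simp: steps_rev)
qed

lemma sigma_append_tl_le:
  assumes "p \<noteq> []" "q \<noteq> []" "last p = hd q" "hd q \<notin> set (tl q)"
    and "set (steps p) \<subseteq> \<Omega>" "set (steps q) \<subseteq> \<Omega>"
  shows "\<sigma> (p @ tl q) \<le> \<sigma> p * \<sigma> q"
proof -
  have "visit_weight \<phi> q = visit_weight \<phi> (tl q)"
    using visit_weight_Cons_fresh[OF \<phi>_0 \<phi>_1 assms(4)] assms(2) by simp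
  then have le: "visit_weight \<phi> (p @ tl q) \<le> visit_weight \<phi> p * visit_weight \<phi> q"
    using visit_weight_append_le \<phi>_0 \<phi>_superadditive by metis
  have nonneg: "0 \<le> prod_list (map \<rho> (steps p)) * prod_list (map \<rho> (steps q))"
    using prod_steps_nonneg assms(5,6) by simp
  show ?thesis
    unfolding sigma_eq_visit_weight steps_append_tl[OF assms(1-3)]
    using mult_right_mono[OF le nonneg] by (simp add: ac_simps)
qed

lemma sigma_append_tl_disjoint:
  assumes "p \<noteq> []" "q \<noteq> []" "last p = hd q" "hd q \<notin> set (tl q)" "set p \<inter> set (tl q) = {}"
  shows "\<sigma> (p @ tl q) = \<sigma> p * \<sigma> q"
proof -
  have "visit_weight \<phi> q = visit_weight \<phi> (tl q)"
    using visit_weight_Cons_fresh[OF \<phi>_0 \<phi>_1 assms(4)] assms(2) by simp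
  then show ?thesis
    unfolding sigma_eq_visit_weight steps_append_tl[OF assms(1-3)]
      visit_weight_append_disjoint[of \<phi> p "tl q", OF \<phi>_0 assms(5)]
    by (simp add: algebra_simps)
qed

lemma sigma_Cons_fresh:
  "a \<notin> set l \<Longrightarrow> l \<noteq> [] \<Longrightarrow> \<sigma> (a # l) = \<rho> (hd l - a) * \<sigma> l"
  unfolding sigma_eq_visit_weight by (simp add: visit_weight_Cons_fresh[OF \<phi>_0 \<phi>_1] steps_Cons)

lemma sigma_snoc_le:
  assumes "xs \<noteq> []" "set (steps xs) \<subseteq> \<Omega>" "a - last xs \<in> \<Omega>"
  shows "\<sigma> (xs @ [a]) \<le> \<sigma> xs * \<rho> (a - last xs)"
proof -
  have le: "visit_weight \<phi> (xs @ [a]) \<le> visit_weight \<phi> xs"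
    using visit_weight_append_le[OF \<phi>_0 \<phi>_superadditive, of xs "[a]"]
    by (simp add: visit_weight_singleton[of \<phi>, OF \<phi>_1])
  have nonneg: "0 \<le> prod_list (map \<rho> (steps xs)) * \<rho> (a - last xs)"
    using prod_steps_nonneg[OF assms(2)] \<rho>_nonneg[OF assms(3)] by simp
  show ?thesis
    unfolding sigma_eq_visit_weight steps_snoc[OF assms(1)]
    using mult_right_mono[OF le nonneg] by (simp add: ac_simps)
qed

lemma walks_length: "\<gamma> \<in> W n \<Longrightarrow> length \<gamma> = Suc n"
  by (simp add: walks_iff)

lemma walks_nth_0: "\<gamma> \<in> W n \<Longrightarrow> \<gamma> ! 0 = 0"
  by (cases \<gamma>) (auto simp: walks_iff origin_eq_0)

lemma walks_nonempty: "\<gamma> \<in> W n \<Longrightarrow> \<gamma> \<noteq> []"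
  by (auto simp: walks_iff)

lemma walks_steps: "\<gamma> \<in> W n \<Longrightarrow> set (steps \<gamma>) \<subseteq> \<Omega>"
  by (simp add: walks_iff)

lemma sigma_walks_nonneg: "\<gamma> \<in> W n \<Longrightarrow> 0 \<le> \<sigma> \<gamma>"
  using sigma_nonneg walks_steps by blast

lemma walks_0: "W 0 = {[origin]}"
  by (auto simp: walks_iff length_Suc_conv)

lemma walks_Suc_butlast:
  assumes "\<gamma> \<in> W (Suc n)"
  shows "butlast \<gamma> \<in> W n" "last \<gamma> - last (butlast \<gamma>) \<in> \<Omega>" "\<gamma> = butlast \<gamma> @ [last \<gamma>]"
proof -
  have \<gamma>: "length \<gamma> = Suc (Suc n)" "hd \<gamma> = origin" "set (steps \<gamma>) \<subseteq> \<Omega>"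
    using assms walks_iff by auto
  then have ne: "butlast \<gamma> \<noteq> []" by (cases \<gamma>) auto
  show snoc: "\<gamma> = butlast \<gamma> @ [last \<gamma>]" using \<gamma>(1) by (cases \<gamma> rule: rev_cases) auto
  have st: "steps \<gamma> = steps (butlast \<gamma>) @ [last \<gamma> - last (butlast \<gamma>)]"
    using steps_snoc[OF ne, of "last \<gamma>"] snoc by simp
  have "hd (butlast \<gamma>) = hd \<gamma>" using ne by (metis snoc hd_append2)
  then show "butlast \<gamma> \<in> W n" using \<gamma> st by (auto simp: walks_iff)
  show "last \<gamma> - last (butlast \<gamma>) \<in> \<Omega>" using \<gamma> st by auto
qed

lemma finite_walks: "finite (W n)"
proof (induction n)
  case 0
  then show ?case by (simp add: walks_0)
next
  case (Suc n)
  have "W (Suc n) \<subseteq> (\<lambda>(\<gamma>, w). \<gamma> @ [last \<gamma> + w]) ` (W n \<times> \<Omega>)"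
  proof
    fix \<gamma> assume \<gamma>: "\<gamma> \<in> W (Suc n)"
    then have "\<gamma> = butlast \<gamma> @ [last (butlast \<gamma>) + (last \<gamma> - last (butlast \<gamma>))]"
      using walks_Suc_butlast(3) by simp
    then show "\<gamma> \<in> (\<lambda>(\<gamma>, w). \<gamma> @ [last \<gamma> + w]) ` (W n \<times> \<Omega>)"
      using walks_Suc_butlast(1,2)[OF \<gamma>]
      by (intro image_eqI[of _ _ "(butlast \<gamma>, last \<gamma> - last (butlast \<gamma>))"]) auto
  qed
  then show ?case using Suc finite_\<Omega> by (meson finite_SigmaI finite_imageI finite_subset)
qed

text \<open>Removing the last step costs at most its factor \<open>\<rho>\<close>, and these factors sum to \<open>1\<close>.\<close>
lemma Z_Suc_le: "Z (Suc n) \<le> Z n"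
proof -
  let ?split = "\<lambda>\<gamma>. (butlast \<gamma>, last \<gamma> - last (butlast \<gamma>))"
  have "Z (Suc n) \<le> (\<Sum>(\<gamma>, w)\<in>W n \<times> \<Omega>. \<sigma> \<gamma> * \<rho> w)"
    unfolding Zn_def
  proof (rule sum_le_sum_inj_on[where f = ?split])
    show "finite (W n \<times> \<Omega>)" using finite_walks finite_\<Omega> by simp
    show "inj_on ?split (W (Suc n))"
      by (rule inj_onI) (metis walks_Suc_butlast(3) diff_add_cancel prod.inject)
    show "?split ` W (Suc n) \<subseteq> W n \<times> \<Omega>"
      using walks_Suc_butlast by auto
    show "\<And>y. y \<in> W n \<times> \<Omega> \<Longrightarrow> 0 \<le> (case y of (\<gamma>, w) \<Rightarrow> \<sigma> \<gamma> * \<rho> w)"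
      using sigma_walks_nonneg \<rho>_nonneg by auto
    fix \<gamma> assume \<gamma>: "\<gamma> \<in> W (Suc n)"
    have "butlast \<gamma> \<noteq> []"
      using walks_length[OF walks_Suc_butlast(1)[OF \<gamma>]] by (metis length_0_conv nat.distinct(1))
    then have "\<sigma> (butlast \<gamma> @ [last \<gamma>]) \<le> \<sigma> (butlast \<gamma>) * \<rho> (last \<gamma> - last (butlast \<gamma>))"
      using walks_Suc_butlast[OF \<gamma>] walks_steps by (intro sigma_snoc_le) auto
    then show "\<sigma> \<gamma> \<le> (case ?split \<gamma> of (\<gamma>, w) \<Rightarrow> \<sigma> \<gamma> * \<rho> w)"
      using walks_Suc_butlast(3)[OF \<gamma>] by simp
  qed
  also have "\<dots> = Z n * (\<Sum>w\<in>\<Omega>. \<rho> w)"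
    unfolding Zn_def sum_product sum.cartesian_product by simp
  finally show ?thesis using \<rho>_sum by simp
qed

lemma bridges_iff:
  "\<gamma> \<in> B n \<longleftrightarrow> \<gamma> \<in> W n \<and> (\<forall>i\<in>{1..n}. 0 < (\<gamma> ! i) 0 \<and> (\<gamma> ! i) 0 \<le> (\<gamma> ! n) 0)"
  unfolding bridges_def xcoord_def by (auto simp: walks_nth_0)

lemma bridges_subset_walks: "B n \<subseteq> W n"
  by (auto simp: bridges_iff)

lemma bridge_x_nonneg: "\<gamma> \<in> B n \<Longrightarrow> i \<le> n \<Longrightarrow> 0 \<le> (\<gamma> ! i) 0"
  by (cases "i = 0") (auto simp: bridges_iff walks_nth_0 less_imp_le)

lemma bridge_x_le_last: "\<gamma> \<in> B n \<Longrightarrow> i \<le> n \<Longrightarrow> (\<gamma> ! i) 0 \<le> (\<gamma> ! n) 0"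
  by (cases "i = 0") (auto simp: bridges_iff walks_nth_0 bridge_x_nonneg)

lemma sigma_bridges_nonneg: "\<gamma> \<in> B n \<Longrightarrow> 0 \<le> \<sigma> \<gamma>"
  using bridges_subset_walks sigma_walks_nonneg by blast

lemma finite_bridges: "finite (B n)"
  using finite_subset[OF bridges_subset_walks finite_walks] .

lemma Hn_le_Zn: "H n \<le> Z n"
  unfolding Hn_def Zn_def
  by (rule sum_mono2[OF finite_walks bridges_subset_walks]) (use sigma_walks_nonneg in blast)

lemma Hn_nonneg: "0 \<le> H n"
  unfolding Hn_def by (intro sum_nonneg) (use sigma_walks_nonneg bridges_subset_walks in blast)

lemma join_walks_nth_left: "p \<in> W m \<Longrightarrow> i \<le> m \<Longrightarrow> join_walks p q ! i = p ! i"
  by (simp add: join_walks_def nth_append walks_length)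

lemma join_walks_nth_right:
  assumes "p \<in> W m" "q \<in> W k" "m \<le> i" "i \<le> m + k"
  shows "join_walks p q ! i = q ! (i - m) + p ! m"
proof (cases "i = m")
  case True
  then show ?thesis using assms by (simp add: join_walks_nth_left walks_nth_0)
next
  case False
  have "last p = p ! m" using walks_length[OF assms(1)] by (subst last_conv_nth) auto
  then show ?thesis
    using assms False walks_length[OF assms(1)] walks_length[OF assms(2)]
    by (simp add: join_walks_def nth_append nth_tl Suc_diff_Suc)
qed

lemma join_walks_inj:
  assumes "p \<in> W m" "q \<in> W k" "p' \<in> W m" "q' \<in> W k'" "join_walks p q = join_walks p' q'"
  shows "p = p'" "q = q'"
proof -
  show p: "p = p'"
    using arg_cong[OF assms(5), of "take (Suc m)"] walks_length assms(1,3)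
    by (simp add: join_walks_def)
  then have "map (\<lambda>v. v + last p) (tl q) = map (\<lambda>v. v + last p) (tl q')"
    using assms(5) by (simp add: join_walks_def map_tl)
  then have "tl q = tl q'" by (rule map_inj_on) (auto intro: inj_onI)
  moreover have "hd q = hd q'" using assms(2,4) by (simp add: walks_iff)
  moreover have "q \<noteq> []" "q' \<noteq> []"
    using walks_length[OF assms(2)] walks_length[OF assms(4)] by auto
  ultimately show "q = q'" by (metis list.collapse)
qed

lemma join_walks_walks:
  assumes "p \<in> W m" "q \<in> W k"
  shows "join_walks p q \<in> W (m + k)"
proof -
  let ?q = "map (\<lambda>v. v + last p) q"
  have "p \<noteq> []" "?q \<noteq> []" using walks_nonempty assms by auto
  moreover have "last p = hd ?q" using assms(2) by (cases q) (auto simp: walks_iff origin_eq_0)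
  moreover have "set (steps ?q) \<subseteq> \<Omega>" using sigma_translate(2) walks_steps[OF assms(2)] .
  ultimately have "set (steps (join_walks p q)) \<subseteq> \<Omega>"
    using walks_steps[OF assms(1)] by (simp add: join_walks_def steps_append_tl)
  then show ?thesis
    using assms \<open>p \<noteq> []\<close> by (auto simp: join_walks_def walks_iff)
qed

lemma join_walks_x_last:
  "p \<in> W m \<Longrightarrow> q \<in> W k \<Longrightarrow> (join_walks p q ! (m + k)) 0 = (p ! m) 0 + (q ! k) 0"
  using join_walks_nth_right[of p m q k "m + k"] by simp

lemma join_walks_x_after:
  assumes "p \<in> B m" "q \<in> B k" "m < i" "i \<le> m + k"
  shows "(p ! m) 0 < (join_walks p q ! i) 0"
proof -
  have "i - m \<in> {1..k}" using assms(3,4) by auto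
  then have "0 < (q ! (i - m)) 0" using assms(2) unfolding bridges_iff by blast
  moreover have "p \<in> W m" "q \<in> W k" using assms(1,2) bridges_subset_walks by auto
  ultimately show ?thesis using join_walks_nth_right[of p m q k i] assms(3,4) by simp
qed

lemma join_bridges:
  assumes "p \<in> B m" "q \<in> B k"
  shows "join_walks p q \<in> B (m + k)"
proof -
  have w: "p \<in> W m" "q \<in> W k" using assms bridges_subset_walks by auto
  have last: "(p ! m) 0 \<le> (join_walks p q ! (m + k)) 0"
    using join_walks_x_last[OF w] bridge_x_nonneg[OF assms(2)] by simp
  have "0 < (join_walks p q ! i) 0 \<and> (join_walks p q ! i) 0 \<le> (join_walks p q ! (m + k)) 0"
    if i: "i \<in> {1..m + k}" for i
  proof (cases "i \<le> m")
    case True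
    then have "0 < (p ! i) 0" "(p ! i) 0 \<le> (p ! m) 0" using i assms(1) unfolding bridges_iff by auto
    then show ?thesis using last join_walks_nth_left[OF w(1) True] by simp
  next
    case False
    then have "i - m \<in> {1..k}" using i by auto
    then have "0 < (q ! (i - m)) 0" "(q ! (i - m)) 0 \<le> (q ! k) 0"
      using assms(2) unfolding bridges_iff by auto
    then show ?thesis
      using False i join_walks_nth_right[OF w, of i] join_walks_x_last[OF w]
        bridge_x_nonneg[OF assms(1), of m]
      by auto
  qed
  then show ?thesis unfolding bridges_iff using join_walks_walks[OF w] by blast
qed

text \<open>The two halves of a concatenation of bridges are separated by the hyperplane
  \<open>x = x(p\<^sub>m)\<close>, so the weight factorises exactly.\<close>
lemma sigma_join_bridges:
  assumes "p \<in> B m" "q \<in> B k"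
  shows "\<sigma> (join_walks p q) = \<sigma> p * \<sigma> q"
proof -
  have w: "p \<in> W m" "q \<in> W k" using assms bridges_subset_walks by auto
  let ?q = "map (\<lambda>v. v + last p) q"
  have last_p: "last p = p ! m" using walks_length[OF w(1)] by (subst last_conv_nth) auto
  have ne: "p \<noteq> []" "?q \<noteq> []" using walks_nonempty w by auto
  have hd_q: "last p = hd ?q" using w(2) by (cases q) (auto simp: walks_iff origin_eq_0)
  have tl_q: "(p ! m) 0 < v 0" if v: "v \<in> set (tl ?q)" for v
  proof -
    obtain j where "j < length (tl ?q)" "v = tl ?q ! j"
      using v unfolding in_set_conv_nth by blast
    then show ?thesis
      using assms(2) walks_length[OF w(2)] last_p by (auto simp: nth_tl bridges_iff)
  qed
  have "v 0 \<le> (p ! m) 0" if "v \<in> set p" for v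
    using that bridge_x_le_last[OF assms(1)] walks_length[OF w(1)]
    by (auto simp: in_set_conv_nth less_Suc_eq_le)
  then have "set p \<inter> set (tl ?q) = {}" using tl_q by force
  moreover have "hd ?q \<notin> set (tl ?q)" using tl_q hd_q last_p by fastforce
  ultimately have "\<sigma> (join_walks p q) = \<sigma> p * \<sigma> ?q"
    unfolding join_walks_def using sigma_append_tl_disjoint[OF ne hd_q] by blast
  then show ?thesis using sigma_translate(1)[OF walks_steps[OF w(2)]] by simp
qed

lemma Hn_supermultiplicative: "H m * H k \<le> H (m + k)"
proof -
  have "H m * H k = (\<Sum>(p, q)\<in>B m \<times> B k. \<sigma> p * \<sigma> q)"
    unfolding Hn_def sum_product sum.cartesian_product by simp
  also have "\<dots> \<le> H (m + k)"
    unfolding Hn_def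
  proof (rule sum_le_sum_inj_on[where f = "\<lambda>(p, q). join_walks p q"])
    show "inj_on (\<lambda>(p, q). join_walks p q) (B m \<times> B k)"
    proof (rule inj_onI, clarsimp)
      fix p q p' q'
      assume "p \<in> B m" "q \<in> B k" "p' \<in> B m" "q' \<in> B k" "join_walks p q = join_walks p' q'"
      then show "p = p' \<and> q = q'"
        using join_walks_inj[of p m q k p' q' k] bridges_subset_walks by blast
    qed
    show "0 \<le> \<sigma> \<gamma>" if "\<gamma> \<in> B (m + k)" for \<gamma>
      using that sigma_walks_nonneg bridges_subset_walks by blast
  qed (use finite_bridges join_bridges sigma_join_bridges in auto)
  finally show ?thesis .
qed

definition bridges_to :: "nat \<Rightarrow> int \<Rightarrow> pt list set" where
  "bridges_to n s = {\<gamma> \<in> B n. (\<gamma> ! n) 0 = s}"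

definition bridge_sum_to :: "nat \<Rightarrow> int \<Rightarrow> real" where
  "bridge_sum_to n s = (\<Sum>\<gamma>\<in>bridges_to n s. \<sigma> \<gamma>)"

lemma finite_bridges_to: "finite (bridges_to n s)"
  using finite_bridges by (simp add: bridges_to_def)

lemma bridge_sum_to_nonneg: "0 \<le> bridge_sum_to n s"
  unfolding bridge_sum_to_def bridges_to_def
  by (intro sum_nonneg) (use sigma_walks_nonneg bridges_subset_walks in blast)

lemma bridge_sum_to_le_Hn: "bridge_sum_to n s \<le> H n"
  unfolding bridge_sum_to_def Hn_def bridges_to_def
  by (rule sum_mono2[OF finite_bridges]) (use sigma_walks_nonneg bridges_subset_walks in blast)+

text \<open>The split point of a concatenation of bridges with \<open>x(p\<^sub>m) = A\<close> is the last visit of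
  \<open>x = A\<close>.\<close>
lemma join_bridges_to_inj:
  assumes b: "p \<in> B m" "q \<in> B (n - m)" "p' \<in> B m'" "q' \<in> B (n - m')"
    and x: "(p ! m) 0 = A" "(p' ! m') 0 = A" and "m \<le> n" "m' \<le> n"
    and eq: "join_walks p q = join_walks p' q'"
  shows "m = m' \<and> p = p' \<and> q = q'"
proof -
  have w: "p \<in> W m" "q \<in> W (n - m)" "p' \<in> W m'" "q' \<in> W (n - m')"
    using b bridges_subset_walks by auto
  have "\<not> m < m'"
  proof
    assume "m < m'"
    then have "A < (join_walks p q ! m') 0"
      using join_walks_x_after[OF b(1,2)] x \<open>m' \<le> n\<close> by auto
    then show False using eq join_walks_nth_left[OF w(3)] x by simp
  qed
  moreover have "\<not> m' < m"
  proof
    assume "m' < m"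
    then have "A < (join_walks p' q' ! m) 0"
      using join_walks_x_after[OF b(3,4)] x \<open>m \<le> n\<close> by auto
    then show False using eq[symmetric] join_walks_nth_left[OF w(1)] x by simp
  qed
  ultimately have "m = m'" by simp
  then show ?thesis using join_walks_inj[OF w(1,2)] w(3,4) eq by auto
qed

lemma bridge_sum_to_convolution_le:
  "(\<Sum>m\<in>{0..n}. bridge_sum_to m A * bridge_sum_to (n - m) s) \<le> bridge_sum_to n (A + s)"
proof -
  let ?S = "Sigma {0..n} (\<lambda>m. bridges_to m A \<times> bridges_to (n - m) s)"
  let ?join = "\<lambda>(m, p, q). join_walks p q"
  have "(\<Sum>m\<in>{0..n}. bridge_sum_to m A * bridge_sum_to (n - m) s)
      = (\<Sum>(m, p, q)\<in>?S. \<sigma> p * \<sigma> q)"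
    unfolding bridge_sum_to_def sum_product sum.cartesian_product
    by (subst sum.Sigma) (auto simp: finite_bridges_to)
  also have "\<dots> \<le> bridge_sum_to n (A + s)"
    unfolding bridge_sum_to_def
  proof (rule sum_le_sum_inj_on[where f = ?join])
    show "inj_on ?join ?S"
      by (rule inj_onI, clarsimp, rule join_bridges_to_inj) (auto simp: bridges_to_def)
    show "?join ` ?S \<subseteq> bridges_to n (A + s)"
    proof clarsimp
      fix m p q assume "m \<le> n" "p \<in> bridges_to m A" "q \<in> bridges_to (n - m) s"
      then show "join_walks p q \<in> bridges_to n (A + s)"
        using join_bridges[of p m q "n - m"] join_walks_x_last[of p m q "n - m"]
          bridges_subset_walks
        by (auto simp: bridges_to_def)
    qed
    show "0 \<le> \<sigma> \<gamma>" if "\<gamma> \<in> bridges_to n (A + s)" for \<gamma>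
      using that sigma_walks_nonneg bridges_subset_walks by (auto simp: bridges_to_def)
    show "(case x of (m, p, q) \<Rightarrow> \<sigma> p * \<sigma> q) \<le> \<sigma> (?join x)" if "x \<in> ?S" for x
      using that sigma_join_bridges by (auto simp: bridges_to_def)
  qed (rule finite_bridges_to)
  finally show ?thesis .
qed

lemma walks_take_drop:
  assumes "\<gamma> \<in> W n" "m \<le> n"
  shows "\<gamma> = take (Suc m) \<gamma> @ tl (drop m \<gamma>)" "last (take (Suc m) \<gamma>) = \<gamma> ! m"
    "hd (drop m \<gamma>) = \<gamma> ! m" "take (Suc m) \<gamma> \<in> W m" "drop m \<gamma> \<noteq> []"
    "length (drop m \<gamma>) = Suc (n - m)" "set (steps (drop m \<gamma>)) \<subseteq> \<Omega>"
proof -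
  have l: "length \<gamma> = Suc n" using walks_length[OF assms(1)] .
  have "tl (drop m \<gamma>) = drop (Suc m) \<gamma>" by (simp add: drop_Suc tl_drop)
  then show split: "\<gamma> = take (Suc m) \<gamma> @ tl (drop m \<gamma>)" by simp
  show hd: "hd (drop m \<gamma>) = \<gamma> ! m" using l assms(2) by (simp add: hd_drop_conv_nth)
  show last: "last (take (Suc m) \<gamma>) = \<gamma> ! m"
    using l assms(2) by (subst last_conv_nth) (auto simp: min_def)
  show ne: "drop m \<gamma> \<noteq> []" "length (drop m \<gamma>) = Suc (n - m)" using l assms(2) by auto
  have "take (Suc m) \<gamma> \<noteq> []" using l by (cases \<gamma>) auto
  then have "steps \<gamma> = steps (take (Suc m) \<gamma>) @ steps (drop m \<gamma>)"
    using steps_append_tl[OF _ ne(1)] split last hd by metis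
  then show "set (steps (drop m \<gamma>)) \<subseteq> \<Omega>" "take (Suc m) \<gamma> \<in> W m"
    using walks_steps[OF assms(1)] assms l by (auto simp: walks_iff min_def)
qed

lemma walks_drop_hd_fresh:
  assumes "\<gamma> \<in> W n" "m \<le> n" "\<And>j. m < j \<Longrightarrow> j \<le> n \<Longrightarrow> (\<gamma> ! j) 0 \<noteq> (\<gamma> ! m) 0"
  shows "hd (drop m \<gamma>) \<notin> set (tl (drop m \<gamma>))"
proof
  assume "hd (drop m \<gamma>) \<in> set (tl (drop m \<gamma>))"
  then obtain j where "j < n - m" "\<gamma> ! (Suc m + j) = \<gamma> ! m"
    using walks_take_drop[OF assms(1,2)] walks_length[OF assms(1)] assms(2)
    by (auto simp: in_set_conv_nth nth_tl)
  moreover have "Suc m + j \<le> n" using \<open>j < n - m\<close> by simp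
  ultimately show False using assms(3)[of "Suc m + j"] by simp
qed

lemma sigma_walks_take_drop_le:
  assumes "\<gamma> \<in> W n" "m \<le> n" "\<And>j. m < j \<Longrightarrow> j \<le> n \<Longrightarrow> (\<gamma> ! j) 0 \<noteq> (\<gamma> ! m) 0"
  shows "\<sigma> \<gamma> \<le> \<sigma> (take (Suc m) \<gamma>) * \<sigma> (drop m \<gamma>)"
proof -
  note split = walks_take_drop[OF assms(1,2)]
  have "take (Suc m) \<gamma> \<noteq> []" using walks_nonempty[OF split(4)] .
  then show ?thesis
    using sigma_append_tl_le[of "take (Suc m) \<gamma>" "drop m \<gamma>"] split walks_steps
      walks_drop_hd_fresh[OF assms]
    by (metis split(1))
qed

definition half_walks :: "nat \<Rightarrow> pt list set" where
  "half_walks n = {\<gamma> \<in> W n. \<forall>i\<in>{1..n}. 0 < (\<gamma> ! i) 0}"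

definition half_walks_span_le :: "nat \<Rightarrow> int \<Rightarrow> pt list set" where
  "half_walks_span_le n A = {\<gamma> \<in> half_walks n. \<forall>i\<le>n. (\<gamma> ! i) 0 \<le> A}"

definition half_sum :: "nat \<Rightarrow> real" where
  "half_sum n = (\<Sum>\<gamma>\<in>half_walks n. \<sigma> \<gamma>)"

definition half_sum_span_le :: "nat \<Rightarrow> int \<Rightarrow> real" where
  "half_sum_span_le n A = (\<Sum>\<gamma>\<in>half_walks_span_le n A. \<sigma> \<gamma>)"

lemma half_walks_subset_walks: "half_walks n \<subseteq> W n"
  by (auto simp: half_walks_def)

lemma finite_half_walks: "finite (half_walks n)"
  using finite_subset[OF half_walks_subset_walks finite_walks] .

lemma finite_half_walks_span_le: "finite (half_walks_span_le n A)"
  by (rule finite_subset[OF _ finite_half_walks]) (auto simp: half_walks_span_le_def)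

lemma sigma_half_walks_nonneg: "\<gamma> \<in> half_walks n \<Longrightarrow> 0 \<le> \<sigma> \<gamma>"
  using half_walks_subset_walks sigma_walks_nonneg by blast

lemma half_sum_nonneg: "0 \<le> half_sum n"
  unfolding half_sum_def by (intro sum_nonneg sigma_half_walks_nonneg)

lemma half_walks_span_le_0: "half_walks_span_le n 0 \<subseteq> bridges_to n 0"
proof
  fix \<gamma> assume \<gamma>: "\<gamma> \<in> half_walks_span_le n 0"
  then have "n = 0"
    by (cases n) (force simp: half_walks_span_le_def half_walks_def)+
  then show "\<gamma> \<in> bridges_to n 0"
    using \<gamma> by (auto simp: bridges_to_def bridges_iff half_walks_span_le_def half_walks_def
        walks_nth_0)
qed

lemma half_walk_split_at_last_max:
  assumes \<gamma>: "\<gamma> \<in> half_walks_span_le n A" and "0 < A" and m: "m \<le> n" "(\<gamma> ! m) 0 = A"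
    and after: "\<And>j. m < j \<Longrightarrow> j \<le> n \<Longrightarrow> (\<gamma> ! j) 0 < A"
  defines "q \<equiv> map (\<lambda>v. reflect_x (v - \<gamma> ! m)) (drop m \<gamma>)"
  shows "take (Suc m) \<gamma> \<in> bridges_to m A" "q \<in> half_walks_span_le (n - m) (A - 1)"
    "\<sigma> \<gamma> \<le> \<sigma> (take (Suc m) \<gamma>) * \<sigma> q"
proof -
  have w: "\<gamma> \<in> W n" and pos: "\<forall>i\<in>{1..n}. 0 < (\<gamma> ! i) 0" and le: "\<forall>i\<le>n. (\<gamma> ! i) 0 \<le> A"
    using \<gamma> by (auto simp: half_walks_span_le_def half_walks_def)
  note split = walks_take_drop[OF w m(1)]
  show "take (Suc m) \<gamma> \<in> bridges_to m A"
    unfolding bridges_to_def bridges_iff using split(4) pos m le by auto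
  have q_nth: "q ! j = reflect_x (\<gamma> ! (m + j) - \<gamma> ! m)" if "j \<le> n - m" for j
    using that m(1) walks_length[OF w] nth_drop[of m \<gamma> j] by (simp add: q_def)
  have q_steps: "set (steps q) \<subseteq> \<Omega>" "\<sigma> q = \<sigma> (drop m \<gamma>)"
    using sigma_reflect[OF split(7)] by (auto simp: q_def)
  have "q \<in> W (n - m)"
    using split(3,5,6) q_steps by (simp add: walks_iff q_def hd_map origin_def reflect_x_def fun_eq_iff)
  moreover have "0 < (q ! j) 0" if "j \<in> {1..n - m}" for j
    using that q_nth[of j] after m(2) by auto
  moreover have "(q ! j) 0 \<le> A - 1" if "j \<le> n - m" for j
    using that q_nth[of j] m pos \<open>0 < A\<close> by (cases "j = 0") (auto simp: order_less_imp_le)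
  ultimately show "q \<in> half_walks_span_le (n - m) (A - 1)"
    by (auto simp: half_walks_span_le_def half_walks_def)
  have "\<sigma> \<gamma> \<le> \<sigma> (take (Suc m) \<gamma>) * \<sigma> (drop m \<gamma>)"
    using after m by (intro sigma_walks_take_drop_le[OF w m(1)]) (metis less_irrefl)
  then show "\<sigma> \<gamma> \<le> \<sigma> (take (Suc m) \<gamma>) * \<sigma> q" using q_steps by simp
qed

definition half_walks_span_eq :: "nat \<Rightarrow> int \<Rightarrow> pt list set" where
  "half_walks_span_eq n A = {\<gamma> \<in> half_walks_span_le n A. \<exists>i\<le>n. (\<gamma> ! i) 0 = A}"

lemma half_walks_span_le_Suc:
  "half_walks_span_le n (A + 1) = half_walks_span_le n A \<union> half_walks_span_eq n (A + 1)"
proof (intro equalityI subsetI)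
  fix \<gamma> assume \<gamma>: "\<gamma> \<in> half_walks_span_le n (A + 1)"
  show "\<gamma> \<in> half_walks_span_le n A \<union> half_walks_span_eq n (A + 1)"
  proof (cases "\<forall>i\<le>n. (\<gamma> ! i) 0 \<le> A")
    case False
    then obtain i where "i \<le> n" "A < (\<gamma> ! i) 0" by auto
    moreover have "(\<gamma> ! i) 0 \<le> A + 1" using \<gamma> \<open>i \<le> n\<close> by (auto simp: half_walks_span_le_def)
    ultimately have "(\<gamma> ! i) 0 = A + 1" by simp
    then show ?thesis using \<gamma> \<open>i \<le> n\<close> by (auto simp: half_walks_span_eq_def)
  qed (use \<gamma> in \<open>auto simp: half_walks_span_le_def\<close>)
qed (auto simp: half_walks_span_le_def half_walks_span_eq_def)

lemma half_walks_span_le_disjoint_span_eq_Suc: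
  "half_walks_span_le n A \<inter> half_walks_span_eq n (A + 1) = {}"
  by (force simp: half_walks_span_le_def half_walks_span_eq_def)

lemma half_sum_span_eq_le:
  assumes "0 < A"
  shows "(\<Sum>\<gamma>\<in>half_walks_span_eq n A. \<sigma> \<gamma>)
    \<le> (\<Sum>m\<in>{0..n}. bridge_sum_to m A * half_sum_span_le (n - m) (A - 1))"
proof -
  define last_max where "last_max \<gamma> = Max {i. i \<le> n \<and> (\<gamma> ! i) 0 = A}" for \<gamma> :: "pt list"
  define cut where "cut \<gamma> = (last_max \<gamma>, take (Suc (last_max \<gamma>)) \<gamma>,
    map (\<lambda>v. reflect_x (v - \<gamma> ! last_max \<gamma>)) (drop (last_max \<gamma>) \<gamma>))" for \<gamma>
  define glue :: "nat \<times> pt list \<times> pt list \<Rightarrow> pt list"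
    where "glue = (\<lambda>(m, p, q). p @ tl (map (\<lambda>w. reflect_x w + last p) q))"
  let ?S = "Sigma {0..n} (\<lambda>m. bridges_to m A \<times> half_walks_span_le (n - m) (A - 1))"
  have cut: "cut \<gamma> \<in> ?S" "\<sigma> \<gamma> \<le> (case cut \<gamma> of (m, p, q) \<Rightarrow> \<sigma> p * \<sigma> q)" "glue (cut \<gamma>) = \<gamma>"
    if \<gamma>: "\<gamma> \<in> half_walks_span_eq n A" for \<gamma>
  proof -
    obtain i where "i \<le> n" "(\<gamma> ! i) 0 = A" using \<gamma> by (auto simp: half_walks_span_eq_def)
    note last_max = Max_index_le[of i n "\<lambda>i. (\<gamma> ! i) 0 = A", OF this, folded last_max_def]
    have \<gamma>': "\<gamma> \<in> half_walks_span_le n A" using \<gamma> by (simp add: half_walks_span_eq_def)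
    then have "(\<gamma> ! j) 0 < A" if "last_max \<gamma> < j" "j \<le> n" for j
      using that last_max(3)[OF that] by (force simp: half_walks_span_le_def)
    note split = half_walk_split_at_last_max[OF \<gamma>' assms last_max(1,2) this]
    show "cut \<gamma> \<in> ?S" "\<sigma> \<gamma> \<le> (case cut \<gamma> of (m, p, q) \<Rightarrow> \<sigma> p * \<sigma> q)"
      using split last_max(1) by (auto simp: cut_def)
    have "\<gamma> \<in> W n" using \<gamma>' half_walks_subset_walks by (auto simp: half_walks_span_le_def)
    then have "last_max \<gamma> < length \<gamma>" using walks_length last_max(1) by simp
    then show "glue (cut \<gamma>) = \<gamma>"
      unfolding glue_def cut_def using take_append_tl_reflected_drop by simp
  qed
  have "(\<Sum>\<gamma>\<in>half_walks_span_eq n A. \<sigma> \<gamma>) \<le> (\<Sum>(m, p, q)\<in>?S. \<sigma> p * \<sigma> q)"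
  proof (rule sum_le_sum_inj_on[where f = cut])
    show "inj_on cut (half_walks_span_eq n A)"
      using cut(3) by (metis inj_on_inverseI)
    show "0 \<le> (case x of (m, p, q) \<Rightarrow> \<sigma> p * \<sigma> q)" if x: "x \<in> ?S" for x
    proof -
      obtain m p q where "x = (m, p, q)" "p \<in> B m" "q \<in> half_walks (n - m)"
        using x by (auto simp: bridges_to_def half_walks_span_le_def)
      then show ?thesis using sigma_bridges_nonneg sigma_half_walks_nonneg by simp
    qed
    show "finite ?S" by (auto simp: finite_bridges_to finite_half_walks_span_le)
    show "\<sigma> \<gamma> \<le> (case cut \<gamma> of (m, p, q) \<Rightarrow> \<sigma> p * \<sigma> q)"
      if "\<gamma> \<in> half_walks_span_eq n A" for \<gamma>
      using cut(2)[OF that] .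
  qed (use cut(1) in blast)
  also have "\<dots> = (\<Sum>m\<in>{0..n}. bridge_sum_to m A * half_sum_span_le (n - m) (A - 1))"
    unfolding bridge_sum_to_def half_sum_span_le_def sum_product sum.cartesian_product
    by (subst sum.Sigma) (auto simp: finite_bridges_to finite_half_walks_span_le)
  finally show ?thesis .
qed

text \<open>Iterating the cut writes a half-space walk of span at most \<open>A\<close> as a concatenation of
  bridges whose spans form a set \<open>S \<subseteq> {1..A}\<close> of distinct integers.\<close>
lemma half_sum_span_le_bound:
  "half_sum_span_le n (int A) \<le> (\<Sum>S\<in>Pow {1..A}. bridge_sum_to n (int (\<Sum>S)))"
proof (induction A arbitrary: n)
  case 0
  have "half_sum_span_le n 0 \<le> bridge_sum_to n 0"
    unfolding half_sum_span_le_def bridge_sum_to_def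
    using half_walks_span_le_0 sigma_bridges_nonneg
    by (intro sum_mono2[OF finite_bridges_to]) (auto simp: bridges_to_def)
  then show ?case by simp
next
  case (Suc A)
  let ?A = "int A + 1"
  let ?bound = "\<lambda>n. \<Sum>S\<in>Pow {1..A}. bridge_sum_to n (int (\<Sum>S))"
  have "half_sum_span_le n ?A
      = half_sum_span_le n (int A) + (\<Sum>\<gamma>\<in>half_walks_span_eq n ?A. \<sigma> \<gamma>)"
    unfolding half_sum_span_le_def half_walks_span_le_Suc
    by (rule sum.union_disjoint[OF finite_half_walks_span_le _ half_walks_span_le_disjoint_span_eq_Suc])
      (rule finite_subset[OF _ finite_half_walks_span_le], auto simp: half_walks_span_eq_def)
  also have "\<dots> \<le> ?bound n + (\<Sum>m\<in>{0..n}. bridge_sum_to m ?A * half_sum_span_le (n - m) (int A))"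
    using Suc.IH[of n] half_sum_span_eq_le[of ?A n] by simp
  also have "\<dots> \<le> ?bound n + (\<Sum>m\<in>{0..n}. bridge_sum_to m ?A * ?bound (n - m))"
    using Suc.IH bridge_sum_to_nonneg by (intro add_left_mono sum_mono mult_left_mono) auto
  also have "(\<Sum>m\<in>{0..n}. bridge_sum_to m ?A * ?bound (n - m))
      = (\<Sum>S\<in>Pow {1..A}. \<Sum>m\<in>{0..n}. bridge_sum_to m ?A * bridge_sum_to (n - m) (int (\<Sum>S)))"
    by (simp add: sum_distrib_left sum.swap[of _ "{0..n}"])
  also have "\<dots> \<le> (\<Sum>S\<in>Pow {1..A}. bridge_sum_to n (?A + int (\<Sum>S)))"
    by (intro sum_mono bridge_sum_to_convolution_le)
  also have "\<dots> = (\<Sum>S\<in>Pow {1..A}. bridge_sum_to n (int (\<Sum>(insert (Suc A) S))))"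
  proof (rule sum.cong)
    fix S assume "S \<in> Pow {1..A}"
    then have "finite S" "Suc A \<notin> S" by (auto intro: finite_subset)
    then show "bridge_sum_to n (?A + int (\<Sum>S)) = bridge_sum_to n (int (\<Sum>(insert (Suc A) S)))"
      by (simp add: ac_simps)
  qed simp
  also have "?bound n + \<dots> = (\<Sum>S\<in>Pow {1..Suc A}. bridge_sum_to n (int (\<Sum>S)))"
    using sum_Pow_insert[of "{1..A}" "Suc A" "\<lambda>S. bridge_sum_to n (int (\<Sum>S))"]
    by (simp add: atLeastAtMostSuc_conv)
  finally show ?case by (simp add: add.commute)
qed

definition step_x_bound :: nat where
  "step_x_bound = nat (Max (insert 0 ((\<lambda>v. v 0) ` \<Omega>)))"

lemma step_x_le_bound: "v \<in> \<Omega> \<Longrightarrow> v 0 \<le> int step_x_bound"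
  unfolding step_x_bound_def using finite_\<Omega> by (simp add: le_max_iff_disj)

lemma walks_x_le: "\<gamma> \<in> W n \<Longrightarrow> i \<le> n \<Longrightarrow> (\<gamma> ! i) 0 \<le> int (step_x_bound * i)"
proof (induction i)
  case 0
  then show ?case by (simp add: walks_nth_0)
next
  case (Suc i)
  then have "steps \<gamma> ! i \<in> \<Omega>"
    using walks_steps walks_length by (metis diff_Suc_1 length_steps less_eq_Suc_le nth_mem subsetD)
  then have "\<gamma> ! Suc i - \<gamma> ! i \<in> \<Omega>"
    using nth_steps[of i \<gamma>] walks_length[OF Suc.prems(1)] Suc.prems(2) by simp
  then have "(\<gamma> ! Suc i - \<gamma> ! i) 0 \<le> int step_x_bound" by (rule step_x_le_bound)
  then show ?case using Suc by (simp add: algebra_simps)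
qed

lemma half_walks_eq_span_le: "half_walks n = half_walks_span_le n (int (step_x_bound * n))"
proof -
  have "(\<gamma> ! i) 0 \<le> int (step_x_bound * n)" if "\<gamma> \<in> half_walks n" "i \<le> n" for \<gamma> i
  proof -
    have "(\<gamma> ! i) 0 \<le> int (step_x_bound * i)"
      using that half_walks_subset_walks walks_x_le by blast
    also have "\<dots> \<le> int (step_x_bound * n)" unfolding of_nat_le_iff using that(2) by simp
    finally show ?thesis .
  qed
  then show ?thesis by (auto simp: half_walks_span_le_def)
qed

lemma bridge_sum_to_beyond:
  assumes "int (step_x_bound * n) < s"
  shows "bridge_sum_to n s = 0"
proof -
  have "(\<gamma> ! n) 0 \<noteq> s" if "\<gamma> \<in> B n" for \<gamma>
    using that bridges_subset_walks walks_x_le[of \<gamma> n n] assms by force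
  then have "bridges_to n s = {}" by (auto simp: bridges_to_def)
  then show ?thesis by (simp add: bridge_sum_to_def)
qed

text \<open>The bridges in the decomposition have distinct spans \<open>S \<subseteq> {1..M}\<close>; weighting a span
  sum \<open>\<Sum>S\<close> by \<open>x ^ (\<Sum>S - M) \<ge> 1\<close> turns the count of such \<open>S\<close> into a product.\<close>
lemma half_sum_le_prod:
  fixes x :: real and n :: nat
  assumes "0 < x" "x \<le> 1"
  defines "M \<equiv> step_x_bound * n"
  shows "half_sum n \<le> H n * ((\<Prod>k\<in>{1..M}. 1 + x ^ k) / x ^ M)"
proof -
  have "half_sum n = half_sum_span_le n (int M)"
    unfolding half_sum_def half_sum_span_le_def half_walks_eq_span_le M_def ..
  also have "\<dots> \<le> (\<Sum>S\<in>Pow {1..M}. bridge_sum_to n (int (\<Sum>S)))"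
    by (rule half_sum_span_le_bound)
  also have "\<dots> \<le> (\<Sum>S\<in>Pow {1..M}. H n * x ^ (\<Sum>S) / x ^ M)"
  proof (rule sum_mono)
    fix S assume "S \<in> Pow {1..M}"
    show "bridge_sum_to n (int (\<Sum>S)) \<le> H n * x ^ (\<Sum>S) / x ^ M"
    proof (cases "\<Sum>S \<le> M")
      case True
      then have "1 \<le> x ^ (\<Sum>S) / x ^ M" using assms(1,2) by (simp add: power_decreasing)
      then have "H n \<le> H n * (x ^ (\<Sum>S) / x ^ M)"
        using Hn_nonneg[of n] mult_left_mono by fastforce
      then show ?thesis using bridge_sum_to_le_Hn[of n "int (\<Sum>S)"] by simp
    next
      case False
      then have "int (step_x_bound * n) < int (\<Sum>S)" unfolding M_def of_nat_less_iff by simp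
      then have "bridge_sum_to n (int (\<Sum>S)) = 0" by (rule bridge_sum_to_beyond)
      then show ?thesis using assms(1) Hn_nonneg[of n] by simp
    qed
  qed
  also have "\<dots> = H n / x ^ M * (\<Sum>S\<in>Pow {1..M}. x ^ (\<Sum>S))"
    by (simp add: sum_distrib_left)
  also have "(\<Sum>S\<in>Pow {1..M}. x ^ (\<Sum>S)) = (\<Prod>k\<in>{1..M}. 1 + x ^ k)"
    using prod_add[of "{1..M}" "\<lambda>k. x ^ k" "\<lambda>_. 1"] by (simp add: power_sum add.commute)
  finally show ?thesis by simp
qed

lemma half_sum_le_exp_sqrt: "half_sum n \<le> exp (3 * sqrt step_x_bound * sqrt n) * H n"
proof (cases "step_x_bound * n = 0")
  case True
  then have "half_sum n \<le> H n" using half_sum_le_prod[of 1 n] by simp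
  also have "\<dots> \<le> exp (3 * sqrt step_x_bound * sqrt n) * H n"
    using Hn_nonneg[of n] by (simp add: mult_le_cancel_right1)
  finally show ?thesis .
next
  case False
  then obtain x where x: "0 < x" "x \<le> 1"
    "(\<Prod>k\<in>{1..step_x_bound * n}. 1 + x ^ k) / x ^ (step_x_bound * n)
      \<le> exp (3 * sqrt (step_x_bound * n))"
    using exists_prod_one_plus_power_div_le_exp_sqrt[of "step_x_bound * n"] by auto
  have "half_sum n \<le> H n * ((\<Prod>k\<in>{1..step_x_bound * n}. 1 + x ^ k) / x ^ (step_x_bound * n))"
    by (rule half_sum_le_prod[OF x(1,2)])
  also have "\<dots> \<le> H n * exp (3 * sqrt (step_x_bound * n))"
    by (rule mult_left_mono[OF x(3) Hn_nonneg])
  finally show ?thesis by (simp add: real_sqrt_mult ac_simps)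
qed

lemma walk_initial_segment_half_walk:
  assumes \<gamma>: "\<gamma> \<in> W n" "m \<le> n" and min: "\<And>j. j \<le> n \<Longrightarrow> (\<gamma> ! m) 0 \<le> (\<gamma> ! j) 0"
    and u: "u \<in> \<Omega>" "0 < u 0"
  defines "p \<equiv> take (Suc m) \<gamma>" and "c \<equiv> \<gamma> ! m - u"
  defines "w \<equiv> map (\<lambda>v. v - c) (c # rev p)"
  shows "w \<in> half_walks (Suc m)" "\<sigma> w = \<rho> u * \<sigma> p" "rev (map (\<lambda>v. v - last w) (tl w)) = p"
proof -
  note split = walks_take_drop[OF \<gamma>, folded p_def]
  have len_p: "length p = Suc m" using walks_length[OF split(4)] .
  have rev_p: "rev p ! j = \<gamma> ! (m - j)" if "j \<le> m" for j
    using that len_p by (simp add: rev_nth p_def)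
  have hd_rev_p: "hd (rev p) = \<gamma> ! m" using split(2) len_p by (simp add: hd_rev)
  have last_rev_p: "last (rev p) = 0"
    using walks_nth_0[OF split(4)] len_p by (cases p) (auto simp: last_rev)
  have ne: "rev p \<noteq> []" using len_p by auto
  have "c \<notin> set p"
  proof
    assume "c \<in> set p"
    then obtain j where "j \<le> m" "\<gamma> ! j = c"
      using len_p by (auto simp: in_set_conv_nth p_def less_Suc_eq_le)
    then show False using min[of j] \<gamma>(2) u(2) by (auto simp: c_def)
  qed
  then have "\<sigma> (c # rev p) = \<rho> u * \<sigma> p"
    using sigma_Cons_fresh[of c "rev p"] ne hd_rev_p sigma_rev walks_steps[OF split(4)]
    by (simp add: c_def)
  moreover have "set (steps (c # rev p)) \<subseteq> \<Omega>"
    using steps_Cons[OF ne, of c] hd_rev_p sigma_rev(2)[OF walks_steps[OF split(4)]] u(1)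
    by (simp add: c_def)
  moreover note sigma_translate[OF this, of "- c"]
  ultimately have \<sigma>_w: "\<sigma> w = \<rho> u * \<sigma> p" and steps_w: "set (steps w) \<subseteq> \<Omega>"
    unfolding w_def by simp_all
  show "\<sigma> w = \<rho> u * \<sigma> p" by (rule \<sigma>_w)
  have "(w ! i) 0 > 0" if i: "i \<in> {1..Suc m}" for i
  proof -
    obtain j where "i = Suc j" "j \<le> m" using i by (cases i) auto
    moreover have "(\<gamma> ! m) 0 \<le> (\<gamma> ! (m - j)) 0" using min \<gamma>(2) by simp
    ultimately show ?thesis using rev_p[of j] len_p u(2) by (simp add: w_def c_def)
  qed
  then show "w \<in> half_walks (Suc m)"
    using steps_w len_p by (auto simp: half_walks_def walks_iff w_def origin_eq_0)
  have "last w = - c" using last_rev_p ne by (simp add: w_def last_map)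
  then show "rev (map (\<lambda>v. v - last w) (tl w)) = p" by (simp add: w_def comp_def)
qed

lemma walk_final_segment_half_walk:
  assumes \<gamma>: "\<gamma> \<in> W n" "m \<le> n" and after: "\<And>j. m < j \<Longrightarrow> j \<le> n \<Longrightarrow> (\<gamma> ! m) 0 < (\<gamma> ! j) 0"
  defines "q \<equiv> map (\<lambda>v. v - \<gamma> ! m) (drop m \<gamma>)"
  shows "q \<in> half_walks (n - m)" "\<sigma> q = \<sigma> (drop m \<gamma>)" "join_walks (take (Suc m) \<gamma>) q = \<gamma>"
proof -
  note split = walks_take_drop[OF \<gamma>]
  have q_nth: "q ! j = \<gamma> ! (m + j) - \<gamma> ! m" if "j \<le> n - m" for j
    using that \<gamma>(2) walks_length[OF \<gamma>(1)] nth_drop[of m \<gamma> j] by (simp add: q_def)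
  show "\<sigma> q = \<sigma> (drop m \<gamma>)" using sigma_translate(1)[OF split(7), of "- \<gamma> ! m"] by (simp add: q_def)
  have "set (steps q) \<subseteq> \<Omega>" using sigma_translate(2)[OF split(7), of "- \<gamma> ! m"] by (simp add: q_def)
  moreover have "hd q = origin" using split(3,5) by (simp add: q_def hd_map origin_eq_0)
  moreover have "(q ! j) 0 > 0" if "j \<in> {1..n - m}" for j using that q_nth[of j] after by auto
  ultimately show "q \<in> half_walks (n - m)"
    using split(6) by (auto simp: half_walks_def walks_iff q_def)
  have "map (\<lambda>v. v + \<gamma> ! m) q = drop m \<gamma>" by (simp add: q_def comp_def)
  then show "join_walks (take (Suc m) \<gamma>) q = \<gamma>"
    using split(1,2) by (simp add: join_walks_def)
qed

lemma Z_le_half_sum_convolution: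
  assumes u: "u \<in> \<Omega>" "0 < u 0"
  shows "\<rho> u * Z n \<le> (\<Sum>m\<in>{0..n}. half_sum (Suc m) * half_sum (n - m))"
proof -
  define is_min where "is_min \<gamma> i \<longleftrightarrow> (\<forall>j\<le>n. (\<gamma> ! i) 0 \<le> (\<gamma> ! j) 0)" for \<gamma> :: "pt list" and i
  define last_min where "last_min \<gamma> = Max {i. i \<le> n \<and> is_min \<gamma> i}" for \<gamma>
  define cut where "cut \<gamma> = (let m = last_min \<gamma>; c = \<gamma> ! m - u in
    (m, map (\<lambda>v. v - c) (c # rev (take (Suc m) \<gamma>)), map (\<lambda>v. v - \<gamma> ! m) (drop m \<gamma>)))" for \<gamma>
  define glue :: "nat \<times> pt list \<times> pt list \<Rightarrow> pt list"
    where "glue = (\<lambda>(m, w, q). join_walks (rev (map (\<lambda>v. v - last w) (tl w))) q)"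
  let ?S = "Sigma {0..n} (\<lambda>m. half_walks (Suc m) \<times> half_walks (n - m))"
  have cut: "cut \<gamma> \<in> ?S" "\<rho> u * \<sigma> \<gamma> \<le> (case cut \<gamma> of (m, w, q) \<Rightarrow> \<sigma> w * \<sigma> q)" "glue (cut \<gamma>) = \<gamma>"
    if \<gamma>: "\<gamma> \<in> W n" for \<gamma>
  proof -
    obtain i where "i \<le> n" "is_min \<gamma> i"
      using arg_min_if_finite(1)[of "{..n}" "\<lambda>j. (\<gamma> ! j) 0"]
        arg_min_least[of "{..n}" _ "\<lambda>j. (\<gamma> ! j) 0"]
      by (auto simp: is_min_def)
    note last_min = Max_index_le[of i n "is_min \<gamma>", OF this, folded last_min_def]
    let ?m = "last_min \<gamma>"
    have min: "(\<gamma> ! ?m) 0 \<le> (\<gamma> ! j) 0" if "j \<le> n" for j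
      using last_min(2) that by (simp add: is_min_def)
    have after: "(\<gamma> ! ?m) 0 < (\<gamma> ! j) 0" if "?m < j" "j \<le> n" for j
      using last_min(2) last_min(3)[OF that] that(2) by (force simp: is_min_def)
    note init = walk_initial_segment_half_walk[OF \<gamma> last_min(1) min u]
    note final = walk_final_segment_half_walk[OF \<gamma> last_min(1) after]
    show "cut \<gamma> \<in> ?S" using init final last_min(1) by (simp add: cut_def Let_def)
    show "glue (cut \<gamma>) = \<gamma>" using init(3) final(3) by (simp add: cut_def Let_def glue_def)
    have "\<sigma> \<gamma> \<le> \<sigma> (take (Suc ?m) \<gamma>) * \<sigma> (drop ?m \<gamma>)"
      using after by (intro sigma_walks_take_drop_le[OF \<gamma> last_min(1)]) (metis less_irrefl)
    then show "\<rho> u * \<sigma> \<gamma> \<le> (case cut \<gamma> of (m, w, q) \<Rightarrow> \<sigma> w * \<sigma> q)"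
      using init(2) final(2) \<rho>_nonneg[OF u(1)]
      by (simp add: cut_def Let_def mult_left_mono mult.assoc)
  qed
  have "(\<Sum>\<gamma>\<in>W n. \<rho> u * \<sigma> \<gamma>) \<le> (\<Sum>(m, w, q)\<in>?S. \<sigma> w * \<sigma> q)"
  proof (rule sum_le_sum_inj_on[where f = cut])
    show "inj_on cut (W n)" using cut(3) by (metis inj_on_inverseI)
    show "finite ?S" by (auto simp: finite_half_walks)
    show "0 \<le> (case x of (m, w, q) \<Rightarrow> \<sigma> w * \<sigma> q)" if "x \<in> ?S" for x
      using that by (auto intro!: mult_nonneg_nonneg sigma_half_walks_nonneg)
  qed (use cut in blast)+
  also have "\<dots> = (\<Sum>m\<in>{0..n}. half_sum (Suc m) * half_sum (n - m))"
    unfolding half_sum_def sum_product sum.cartesian_product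
    by (subst sum.Sigma) (auto simp: finite_half_walks)
  finally show ?thesis unfolding Zn_def by (simp add: sum_distrib_left)
qed

lemma half_sum_convolution_le:
  defines "c \<equiv> 3 * sqrt step_x_bound"
  shows "(\<Sum>m\<in>{0..n}. half_sum (Suc m) * half_sum (n - m))
    \<le> real (Suc n) * exp (2 * c * sqrt (Suc n)) * H (Suc n)"
proof -
  have half_sum_le: "half_sum k \<le> exp (c * sqrt k) * H k" for k
    using half_sum_le_exp_sqrt[of k] by (simp add: c_def)
  have "half_sum (Suc m) * half_sum (n - m) \<le> exp (2 * c * sqrt (Suc n)) * H (Suc n)"
    if "m \<le> n" for m
  proof -
    have "half_sum (Suc m) * half_sum (n - m)
        \<le> (exp (c * sqrt (Suc m)) * H (Suc m)) * (exp (c * sqrt (n - m)) * H (n - m))"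
      by (intro mult_mono half_sum_le half_sum_nonneg mult_nonneg_nonneg Hn_nonneg) auto
    also have "\<dots> = exp (c * sqrt (Suc m) + c * sqrt (n - m)) * (H (Suc m) * H (n - m))"
      by (simp add: exp_add)
    also have "\<dots> \<le> exp (2 * c * sqrt (Suc n)) * H (Suc m + (n - m))"
    proof (intro mult_mono Hn_supermultiplicative mult_nonneg_nonneg Hn_nonneg)
      have "c * sqrt (Suc m) + c * sqrt (n - m) \<le> c * sqrt (Suc n) + c * sqrt (Suc n)"
        using that by (intro add_mono mult_left_mono) (auto simp: c_def)
      then show "exp (c * sqrt (Suc m) + c * sqrt (n - m)) \<le> exp (2 * c * sqrt (Suc n))"
        by simp
    qed auto
    finally show ?thesis using that by simp
  qed
  then have "(\<Sum>m\<in>{0..n}. half_sum (Suc m) * half_sum (n - m))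
      \<le> (\<Sum>m\<in>{0..n}. exp (2 * c * sqrt (Suc n)) * H (Suc n))"
    by (intro sum_mono) auto
  then show ?thesis by simp
qed

lemma Z_le_exp_sqrt_H:
  assumes u: "u \<in> \<Omega>" "0 < \<rho> u" "0 < u 0"
  shows "\<exists>C>0. \<forall>n. Z n \<le> exp (C * sqrt n) * H n"
proof -
  define c where "c = 3 * sqrt step_x_bound"
  define C where "C = 2 + \<bar>ln (1 / \<rho> u)\<bar> + 2 * c"
  have "Z N \<le> exp (C * sqrt N) * H N" for N
  proof (cases N)
    case 0
    then show ?thesis by (simp add: Hn_def Zn_def bridges_def)
  next
    case (Suc n)
    have "\<rho> u * Z N \<le> \<rho> u * Z n" using Z_Suc_le[of n] Suc u(2) by simp
    also have "\<dots> \<le> real N * exp (2 * c * sqrt N) * H N"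
      using order.trans[OF Z_le_half_sum_convolution[OF u(1,3)] half_sum_convolution_le] Suc
      by (simp add: c_def)
    finally have "Z N \<le> (real N * (1 / \<rho> u)) * exp (2 * c * sqrt N) * H N"
      using u(2) by (simp add: field_simps)
    also have "\<dots> \<le> exp ((2 + \<bar>ln (1 / \<rho> u)\<bar>) * sqrt N) * exp (2 * c * sqrt N) * H N"
      using mult_le_exp_mult_sqrt[of N "1 / \<rho> u"] Suc u(2) Hn_nonneg
      by (intro mult_right_mono) auto
    finally show ?thesis by (simp add: C_def exp_add[symmetric] algebra_simps)
  qed
  moreover have "0 < C" by (simp add: C_def c_def add_pos_nonneg)
  ultimately show ?thesis by blast
qed

lemma bridges_walks_comparison:
  assumes "u \<in> \<Omega>" "0 < \<rho> u" "0 < u 0"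
  shows "\<exists>C>0. \<forall>n. exp (- C * sqrt n) * Z n \<le> H n \<and> H n \<le> Z n"
proof -
  obtain C where "0 < C" and C: "\<And>n. Z n \<le> exp (C * sqrt n) * H n"
    using Z_le_exp_sqrt_H[OF assms] by blast
  have "exp (- C * sqrt n) * Z n \<le> H n" for n
    using mult_left_mono[OF C[of n], of "exp (- C * sqrt n)"] by (simp add: exp_minus field_simps)
  then show ?thesis using \<open>0 < C\<close> Hn_le_Zn by blast
qed

end

lemma is_symmetry_sym_map:
  "bij_betw p {..<d} {..<d} \<Longrightarrow> (\<And>i. i < d \<Longrightarrow> s i = 1 \<or> s i = -1) \<Longrightarrow>
    is_symmetry d (sym_map d p s)"
  unfolding is_symmetry_def by blast

lemma sym_map_uminus: "in_Zd d v \<Longrightarrow> sym_map d id (\<lambda>_. -1) v = - v"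
  by (auto simp: sym_map_def fun_eq_iff in_Zd_def)

lemma sym_map_reflect_x:
  "0 < d \<Longrightarrow> in_Zd d v \<Longrightarrow> sym_map d id (\<lambda>i. if i = 0 then -1 else 1) v = reflect_x v"
  by (auto simp: sym_map_def fun_eq_iff in_Zd_def reflect_x_def)

lemma exists_symmetry_x_pos:
  assumes "in_Zd d v" "v \<noteq> origin"
  obtains g where "is_symmetry d g" "0 < g v 0"
proof -
  obtain j where "v j \<noteq> 0" using assms(2) by (auto simp: origin_def)
  then have "j < d" using assms(1) by (meson in_Zd_def not_less)
  let ?p = "id(0 := j, j := 0)" and ?s = "\<lambda>i. if i = 0 then sgn (v j) else 1"
  have "bij_betw ?p {..<d} {..<d}"
    by (rule bij_betw_byWitness[where f' = ?p]) (use \<open>j < d\<close> in auto)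
  then have "is_symmetry d (sym_map d ?p ?s)"
    using \<open>v j \<noteq> 0\<close> by (intro is_symmetry_sym_map) (auto simp: sgn_if)
  moreover have "0 < sym_map d ?p ?s v 0"
    using \<open>v j \<noteq> 0\<close> \<open>j < d\<close> by (auto simp: sym_map_def sgn_if)
  ultimately show ?thesis by (rule that)
qed

theorem proposition3:
  fixes d :: nat and \<Omega> :: "pt set" and \<phi> :: "nat \<Rightarrow> real" and \<rho> :: "pt \<Rightarrow> real"
  assumes "finite \<Omega>"
    and "\<forall>v\<in>\<Omega>. in_Zd d v"
    and "origin \<notin> \<Omega>"
    and "\<forall>g. is_symmetry d g \<longrightarrow> (\<forall>v\<in>\<Omega>. g v \<in> \<Omega>)"
    and "\<forall>a. \<phi> a \<ge> 0"
    and "\<phi> 0 = 0" and "\<phi> 1 = 0"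
    and "\<forall>a b. \<phi> (a + b) \<ge> \<phi> a + \<phi> b"
    and "\<forall>v\<in>\<Omega>. \<rho> v \<ge> 0"
    and "(\<Sum>v\<in>\<Omega>. \<rho> v) = 1"
    and "\<forall>g. is_symmetry d g \<longrightarrow> (\<forall>v\<in>\<Omega>. \<rho> (g v) = \<rho> v)"
  shows "\<exists>C>0. \<forall>n::nat. exp (- C * sqrt (real n)) * Zn \<Omega> \<phi> \<rho> n \<le> Hn \<Omega> \<phi> \<rho> n
                        \<and> Hn \<Omega> \<phi> \<rho> n \<le> Zn \<Omega> \<phi> \<rho> n"
proof -
  have symmetric: "g v \<in> \<Omega> \<and> \<rho> (g v) = \<rho> v" if "is_symmetry d g" "v \<in> \<Omega>" for g v
    using that assms(4,11) by blast
  have "\<not> (\<forall>v\<in>\<Omega>. \<rho> v \<le> 0)" using sum_nonpos[of \<Omega> \<rho>] assms(10) by auto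
  then obtain v where v: "v \<in> \<Omega>" "0 < \<rho> v" by (auto simp: not_le)
  obtain g where g: "is_symmetry d g" "0 < g v 0"
    using exists_symmetry_x_pos[of d v] v(1) assms(2,3) by metis
  have "0 < d" using g by (auto simp: sym_map_def is_symmetry_def split: if_splits)
  interpret walk_model \<Omega> \<phi> \<rho>
  proof
    show "- w \<in> \<Omega> \<and> \<rho> (- w) = \<rho> w" if "w \<in> \<Omega>" for w
      using symmetric[OF is_symmetry_sym_map[of id d "\<lambda>_. -1"] that] sym_map_uminus assms(2) that
      by auto
    show "reflect_x w \<in> \<Omega> \<and> \<rho> (reflect_x w) = \<rho> w" if "w \<in> \<Omega>" for w
      using symmetric[OF is_symmetry_sym_map[of id d "\<lambda>i. if i = 0 then -1 else 1"] that]
        sym_map_reflect_x[OF \<open>0 < d\<close>] assms(2) that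
      by auto
  qed (use assms in auto)
  show ?thesis
    using bridges_walks_comparison[of "g v"] symmetric[OF g(1) v(1)] v g(2) by simp
qed

end
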